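(* Let $H=H(\mathcal{P})=(V,E)$ be the Hasse diagram of a finite poset $\mathcal{P}$ and $\phi\colon E\to\mathbf{Z}^+$ an edge coloring. Let $I=I(\mathcal{P},\phi)$ be the SM instance produced by $\mathsf{ConstructInstance}(H,\phi)$ (described below). Then all men's preference lists in $I$ have length at most $3$ if and only if $\phi$ is a proper in-coloring, and all women's preference lists in $I$ have length at most $3$ if and only if $\phi$ is a proper out-coloring.
   Context: An edge coloring $\phi$ of a directed graph is a proper in-coloring if any two distinct edges entering the same vertex receive different colors, and a proper out-coloring if any two distinct edges leaving the same vertex receive different colors. Construction $\mathsf{ConstructInstance}(H,\phi)$ with $V=\{1,\dots,p\}$: for each $v$, let $C_v$ be the set of colors of edges incident to $v$ (entering or leaving); if $|C_v|<2$, add colors from $\{1,2\}$ to $C_v$ until $|C_v|=2$. For each $v$ and $c\in C_v$ create a man $m_{c,v}$ and a woman $w_{c,v}$. Fix an arbitrary cyclic ordering of $C_v$ and for $c\in C_v$ let $c^+$, $c^-$ be the next and previous colors. The preference list of $m_{c,v}$ is: $w_{c,v}$, then the women $w_{c,u}$ for all edges $(u,v)\in E$ with $\phi((u,v))=c$ (in some order), then $w_{c^+,v}$. The preference list of $w_{c,v}$ is: $m_{c^-,v}$, then the men $m_{c,y}$ for all edges $(v,y)\in E$ with $\phi((v,y))=c$ (in some order), then $m_{c,v}$. No other pairs are acceptable. *)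

theory Defs
  imports Main
begin

text \<open>Vertices of the poset are 1..p; the poset order is a relation R (pairs (x,y) meaning x \<le> y).\<close>

definition hasse_edges :: "(nat \<times> nat) set \<Rightarrow> (nat \<times> nat) set" where
  "hasse_edges R = {(u, v). (u, v) \<in> R \<and> u \<noteq> v \<and>
      \<not> (\<exists>w. (u, w) \<in> R \<and> (w, v) \<in> R \<and> w \<noteq> u \<and> w \<noteq> v)}"

definition proper_in_coloring :: "(nat \<times> nat) set \<Rightarrow> (nat \<times> nat \<Rightarrow> nat) \<Rightarrow> bool" where
  "proper_in_coloring E \<phi> \<longleftrightarrow>
     (\<forall>e1\<in>E. \<forall>e2\<in>E. e1 \<noteq> e2 \<and> snd e1 = snd e2 \<longrightarrow> \<phi> e1 \<noteq> \<phi> e2)"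

definition proper_out_coloring :: "(nat \<times> nat) set \<Rightarrow> (nat \<times> nat \<Rightarrow> nat) \<Rightarrow> bool" where
  "proper_out_coloring E \<phi> \<longleftrightarrow>
     (\<forall>e1\<in>E. \<forall>e2\<in>E. e1 \<noteq> e2 \<and> fst e1 = fst e2 \<longrightarrow> \<phi> e1 \<noteq> \<phi> e2)"

definition incident_colors :: "(nat \<times> nat) set \<Rightarrow> (nat \<times> nat \<Rightarrow> nat) \<Rightarrow> nat \<Rightarrow> nat set" where
  "incident_colors E \<phi> v = \<phi> ` {e \<in> E. fst e = v \<or> snd e = v}"

definition valid_color_set :: "(nat \<times> nat) set \<Rightarrow> (nat \<times> nat \<Rightarrow> nat) \<Rightarrow> nat \<Rightarrow> nat set \<Rightarrow> bool" where
  "valid_color_set E \<phi> v S \<longleftrightarrow>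
     (let D = incident_colors E \<phi> v in
       (if card D < 2 then D \<subseteq> S \<and> S - D \<subseteq> {1, 2} \<and> card S = 2 else S = D))"

text \<open>succ is a cyclic ordering of the finite set C (c^+ = succ c), pred gives c^-.\<close>
definition cyclic_order_on :: "nat set \<Rightarrow> (nat \<Rightarrow> nat) \<Rightarrow> (nat \<Rightarrow> nat) \<Rightarrow> bool" where
  "cyclic_order_on C succ pred \<longleftrightarrow>
     bij_betw succ C C \<and> (\<forall>c\<in>C. pred (succ c) = c \<and> pred c \<in> C) \<and>
     (\<forall>c\<in>C. \<forall>d\<in>C. \<exists>n. (succ ^^ n) c = d)"

text \<open>Men m_{c,v} and women w_{c,v} are encoded as pairs (c,v).
  prefM (c,v) / prefW (c,v) are the preference lists. The predicate below says that
  (prefM, prefW) is an output of ConstructInstance(H, \<phi>) for H the Hasse diagram of R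
  on V = {1..p}, for some admissible choices of C_v, cyclic orderings and list orders.\<close>
definition construct_instance ::
  "nat \<Rightarrow> (nat \<times> nat) set \<Rightarrow> (nat \<times> nat \<Rightarrow> nat) \<Rightarrow> (nat \<Rightarrow> nat set) \<Rightarrow>
   (nat \<times> nat \<Rightarrow> (nat \<times> nat) list) \<Rightarrow> (nat \<times> nat \<Rightarrow> (nat \<times> nat) list) \<Rightarrow> bool" where
  "construct_instance p E \<phi> C prefM prefW \<longleftrightarrow>
     (\<forall>v\<in>{1..p}. valid_color_set E \<phi> v (C v)) \<and>
     (\<exists>succ pred.
        (\<forall>v\<in>{1..p}. cyclic_order_on (C v) (succ v) (pred v)) \<and>
        (\<forall>v\<in>{1..p}. \<forall>c\<in>C v.
           (\<exists>us. distinct us \<and> set us = {u. (u, v) \<in> E \<and> \<phi> (u, v) = c} \<and>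
              prefM (c, v) = [(c, v)] @ map (\<lambda>u. (c, u)) us @ [(succ v c, v)]) \<and>
           (\<exists>ys. distinct ys \<and> set ys = {y. (v, y) \<in> E \<and> \<phi> (v, y) = c} \<and>
              prefW (c, v) = [(pred v c, v)] @ map (\<lambda>y. (c, y)) ys @ [(c, v)])))"

end

theory Submission
  imports Defs
begin

text \<open>Besides w_{c,v} and w_{c+,v}, the list of the man m_{c,v} holds one woman per edge
  entering v with colour c, so it has length at most 3 iff v has at most one entering edge of
  colour c. Every colour of an edge at v belongs to C_v, hence ranging over all c in C_v captures
  proper in-colouring exactly. Women and leaving edges are dual.\<close>

definition in_color_class :: "('a \<times> 'a) set \<Rightarrow> ('a \<times> 'a \<Rightarrow> 'c) \<Rightarrow> 'c \<Rightarrow> 'a \<Rightarrow> 'a set" where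
  "in_color_class E \<phi> c v = {u. (u, v) \<in> E \<and> \<phi> (u, v) = c}"

definition out_color_class :: "('a \<times> 'a) set \<Rightarrow> ('a \<times> 'a \<Rightarrow> 'c) \<Rightarrow> 'c \<Rightarrow> 'a \<Rightarrow> 'a set" where
  "out_color_class E \<phi> c v = {y. (v, y) \<in> E \<and> \<phi> (v, y) = c}"

lemma distinct_length_le_1_iff:
  "distinct xs \<Longrightarrow> length xs \<le> 1 \<longleftrightarrow> (\<forall>x\<in>set xs. \<forall>y\<in>set xs. x = y)"
  by (cases xs rule: remdups_adj.cases) auto

lemma hasse_edges_subset:
  assumes "partial_order_on A R"
  shows "hasse_edges R \<subseteq> A \<times> A"
  using assms unfolding partial_order_on_def preorder_on_def refl_on_def hasse_edges_def by blast

lemma valid_color_set_edge_color: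
  assumes "valid_color_set E \<phi> v S" and "e \<in> E" and "fst e = v \<or> snd e = v"
  shows "\<phi> e \<in> S"
proof -
  have "\<phi> e \<in> incident_colors E \<phi> v"
    using assms(2,3) unfolding incident_colors_def by blast
  then show ?thesis
    using assms(1) unfolding valid_color_set_def Let_def by (auto split: if_splits)
qed

lemma proper_in_coloring_iff_in_color_classes:
  assumes "Range E \<subseteq> V" and "\<And>u v. (u, v) \<in> E \<Longrightarrow> \<phi> (u, v) \<in> C v"
  shows "proper_in_coloring E \<phi> \<longleftrightarrow>
    (\<forall>v\<in>V. \<forall>c\<in>C v. \<forall>u\<in>in_color_class E \<phi> c v. \<forall>u'\<in>in_color_class E \<phi> c v. u = u')"
  using assms unfolding proper_in_coloring_def in_color_class_def by fastforce

lemma proper_out_coloring_iff_out_color_classes: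
  assumes "Domain E \<subseteq> V" and "\<And>v y. (v, y) \<in> E \<Longrightarrow> \<phi> (v, y) \<in> C v"
  shows "proper_out_coloring E \<phi> \<longleftrightarrow>
    (\<forall>v\<in>V. \<forall>c\<in>C v. \<forall>y\<in>out_color_class E \<phi> c v. \<forall>y'\<in>out_color_class E \<phi> c v. y = y')"
  using assms unfolding proper_out_coloring_def out_color_class_def by fastforce

lemma construct_instance_prefM_length_le_3_iff:
  assumes "construct_instance p E \<phi> C prefM prefW" and "v \<in> {1..p}" and "c \<in> C v"
  shows "length (prefM (c, v)) \<le> 3 \<longleftrightarrow>
    (\<forall>u\<in>in_color_class E \<phi> c v. \<forall>u'\<in>in_color_class E \<phi> c v. u = u')"
proof -
  obtain us where "distinct us" "set us = in_color_class E \<phi> c v"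
    and "length (prefM (c, v)) = length us + 2"
    using assms unfolding construct_instance_def in_color_class_def by fastforce
  then show ?thesis using distinct_length_le_1_iff[of us] by simp
qed

lemma construct_instance_prefW_length_le_3_iff:
  assumes "construct_instance p E \<phi> C prefM prefW" and "v \<in> {1..p}" and "c \<in> C v"
  shows "length (prefW (c, v)) \<le> 3 \<longleftrightarrow>
    (\<forall>y\<in>out_color_class E \<phi> c v. \<forall>y'\<in>out_color_class E \<phi> c v. y = y')"
proof -
  obtain ys where "distinct ys" "set ys = out_color_class E \<phi> c v"
    and "length (prefW (c, v)) = length ys + 2"
    using assms unfolding construct_instance_def out_color_class_def by fastforce
  then show ?thesis using distinct_length_le_1_iff[of ys] by simp
qed

theorem proposition4p1:
  fixes p :: nat and R :: "(nat \<times> nat) set" and \<phi> :: "nat \<times> nat \<Rightarrow> nat"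
    and C :: "nat \<Rightarrow> nat set"
    and prefM prefW :: "nat \<times> nat \<Rightarrow> (nat \<times> nat) list"
  assumes "partial_order_on {1..p} R"
    and "\<forall>e\<in>hasse_edges R. \<phi> e > 0"
    and "construct_instance p (hasse_edges R) \<phi> C prefM prefW"
  shows "((\<forall>v\<in>{1..p}. \<forall>c\<in>C v. length (prefM (c, v)) \<le> 3)
            \<longleftrightarrow> proper_in_coloring (hasse_edges R) \<phi>)
       \<and> ((\<forall>v\<in>{1..p}. \<forall>c\<in>C v. length (prefW (c, v)) \<le> 3)
            \<longleftrightarrow> proper_out_coloring (hasse_edges R) \<phi>)"
proof -
  let ?E = "hasse_edges R"
  have E_sub: "?E \<subseteq> {1..p} \<times> {1..p}"
    using assms(1) by (rule hasse_edges_subset)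
  have valid: "valid_color_set ?E \<phi> v (C v)" if "v \<in> {1..p}" for v
    using assms(3) that unfolding construct_instance_def by blast
  have in_colors: "\<phi> (u, v) \<in> C v" if "(u, v) \<in> ?E" for u v
    using valid_color_set_edge_color[OF valid that] E_sub that by auto
  have out_colors: "\<phi> (v, y) \<in> C v" if "(v, y) \<in> ?E" for v y
    using valid_color_set_edge_color[OF valid that] E_sub that by auto
  have "proper_in_coloring ?E \<phi> \<longleftrightarrow>
    (\<forall>v\<in>{1..p}. \<forall>c\<in>C v. \<forall>u\<in>in_color_class ?E \<phi> c v. \<forall>u'\<in>in_color_class ?E \<phi> c v. u = u')"
    by (rule proper_in_coloring_iff_in_color_classes) (use E_sub in_colors in auto)
  also have "\<dots> \<longleftrightarrow> (\<forall>v\<in>{1..p}. \<forall>c\<in>C v. length (prefM (c, v)) \<le> 3)"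
    using construct_instance_prefM_length_le_3_iff[OF assms(3)] by simp
  finally have in_iff: "proper_in_coloring ?E \<phi> \<longleftrightarrow>
    (\<forall>v\<in>{1..p}. \<forall>c\<in>C v. length (prefM (c, v)) \<le> 3)" .
  have "proper_out_coloring ?E \<phi> \<longleftrightarrow>
    (\<forall>v\<in>{1..p}. \<forall>c\<in>C v. \<forall>y\<in>out_color_class ?E \<phi> c v. \<forall>y'\<in>out_color_class ?E \<phi> c v. y = y')"
    by (rule proper_out_coloring_iff_out_color_classes) (use E_sub out_colors in auto)
  also have "\<dots> \<longleftrightarrow> (\<forall>v\<in>{1..p}. \<forall>c\<in>C v. length (prefW (c, v)) \<le> 3)"
    using construct_instance_prefW_length_le_3_iff[OF assms(3)] by simp
  finally have out_iff: "proper_out_coloring ?E \<phi> \<longleftrightarrow>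
    (\<forall>v\<in>{1..p}. \<forall>c\<in>C v. length (prefW (c, v)) \<le> 3)" .
  show ?thesis using in_iff out_iff by blast
qed

end
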